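(* For every finite simple digraph $G$, ${\sf dgw}(G) \leq {\sf circ}(G) + 1$, where ${\sf dgw}(G)$ is the DAG-width of $G$ and ${\sf circ}(G)$ is its circumference.
   Context: All digraphs are finite and simple (no loops, no multiple arcs). The circumference ${\sf circ}(G)$ of a digraph $G$ is the length (number of arcs) of a longest simple directed cycle in $G$; if $G$ is acyclic (a DAG), ${\sf circ}(G)$ is defined to be $1$. For a DAG $T$ and distinct nodes $i,j$, write $i\prec j$ if there is a directed walk in $T$ from $i$ to $j$, and $i\preceq j$ if $i=j$ or $i\prec j$; a root is a node with no incoming arcs. Given sets $X_i$ for nodes $i$, let $X_{\succeq j}=\bigcup_{k\succeq j}X_k$. For $W,X\subseteq V(G)$, $X$ guards $W$ if $W\cap X=\emptyset$ and for every arc $(u,v)$ of $G$ with $u\in W$ we have $v\in W\cup X$. A DAG-decomposition of $G$ is a pair $(T,(X_i)_{i\in V(T)})$ where $T$ is a DAG and each $X_i\subseteq V(G)$, such that: (1) $\bigcup_{i}X_i=V(G)$; (2) for all nodes $i,j,k$ of $T$ with $i\preceq j\preceq k$, $X_i\cap X_k\subseteq X_j$; (3) for every arc $(i,j)$ of $T$, $X_i\cap X_j$ guards $X_{\succeq j}\setminus X_i$, and for every root $r$ of $T$, $X_{\succeq r}$ is guarded by $\emptyset$. Its width is $\max_i |X_i|$, and the DAG-width ${\sf dgw}(G)$ is the minimum width of a DAG-decomposition of $G$. *)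

theory Defs
  imports Main
begin

text \<open>A finite simple digraph: finite vertex set V, arc relation E \<subseteq> V \<times> V, no loops.
  (Multiple arcs are impossible since E is a set of pairs.)\<close>
definition simple_digraph :: "'a set \<Rightarrow> ('a \<times> 'a) set \<Rightarrow> bool" where
  "simple_digraph V E \<longleftrightarrow> finite V \<and> E \<subseteq> V \<times> V \<and> (\<forall>v. (v, v) \<notin> E)"

text \<open>A simple directed cycle, given as the list of its distinct vertices
  v_0,...,v_{k-1} (k \<ge> 2) with arcs v_i \<rightarrow> v_{i+1 mod k}. Its length (number of arcs) is k.\<close>
definition is_dicycle :: "('a \<times> 'a) set \<Rightarrow> 'a list \<Rightarrow> bool" where
  "is_dicycle E cs \<longleftrightarrow> length cs \<ge> 2 \<and> distinct cs \<and>
     (\<forall>i < length cs. (cs ! i, cs ! (Suc i mod length cs)) \<in> E)"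

definition circ :: "'a set \<Rightarrow> ('a \<times> 'a) set \<Rightarrow> nat" where
  "circ V E = (if \<exists>cs. is_dicycle E cs then Max {length cs | cs. is_dicycle E cs} else 1)"

definition dprec :: "('b \<times> 'b) set \<Rightarrow> 'b \<Rightarrow> 'b \<Rightarrow> bool" where
  "dprec A i j \<longleftrightarrow> (i, j) \<in> A\<^sup>+"

definition dpreceq :: "('b \<times> 'b) set \<Rightarrow> 'b \<Rightarrow> 'b \<Rightarrow> bool" where
  "dpreceq A i j \<longleftrightarrow> i = j \<or> dprec A i j"

definition Xsucceq :: "'b set \<Rightarrow> ('b \<times> 'b) set \<Rightarrow> ('b \<Rightarrow> 'a set) \<Rightarrow> 'b \<Rightarrow> 'a set" where
  "Xsucceq N A X j = (\<Union>k \<in> {k \<in> N. dpreceq A j k}. X k)"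

definition guards :: "('a \<times> 'a) set \<Rightarrow> 'a set \<Rightarrow> 'a set \<Rightarrow> bool" where
  "guards E X W \<longleftrightarrow> W \<inter> X = {} \<and> (\<forall>u v. (u, v) \<in> E \<longrightarrow> u \<in> W \<longrightarrow> v \<in> W \<union> X)"

definition is_root :: "'b set \<Rightarrow> ('b \<times> 'b) set \<Rightarrow> 'b \<Rightarrow> bool" where
  "is_root N A r \<longleftrightarrow> r \<in> N \<and> (\<forall>i. (i, r) \<notin> A)"

definition dag_decomposition ::
  "'a set \<Rightarrow> ('a \<times> 'a) set \<Rightarrow> 'b set \<Rightarrow> ('b \<times> 'b) set \<Rightarrow> ('b \<Rightarrow> 'a set) \<Rightarrow> bool" where
  "dag_decomposition V E N A X \<longleftrightarrow>
     finite N \<and> A \<subseteq> N \<times> N \<and> acyclic A \<and>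
     (\<forall>i \<in> N. X i \<subseteq> V) \<and>
     (\<Union>i \<in> N. X i) = V \<and>
     (\<forall>i \<in> N. \<forall>j \<in> N. \<forall>k \<in> N. dpreceq A i j \<and> dpreceq A j k \<longrightarrow> X i \<inter> X k \<subseteq> X j) \<and>
     (\<forall>(i, j) \<in> A. guards E (X i \<inter> X j) (Xsucceq N A X j - X i)) \<and>
     (\<forall>r. is_root N A r \<longrightarrow> guards E {} (Xsucceq N A X r))"

definition dd_width :: "'b set \<Rightarrow> ('b \<Rightarrow> 'a set) \<Rightarrow> nat" where
  "dd_width N X = Max (insert 0 ((\<lambda>i. card (X i)) ` N))"

text \<open>DAG-width: minimum width of a DAG-decomposition. Nodes of T are taken from nat
  (every finite DAG is isomorphic to one on natural numbers).\<close>
definition dgw :: "'a set \<Rightarrow> ('a \<times> 'a) set \<Rightarrow> nat" where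
  "dgw V E = (LEAST k. \<exists>(N :: nat set) A X. dag_decomposition V E N A X \<and> dd_width N X = k)"

end

theory Submission
  imports Defs
begin

text \<open>Fix a depth-first search forest of the digraph. The region of a vertex \<open>v\<close> is the set of
  vertices reachable from \<open>v\<close> by a walk avoiding the proper tree ancestors of \<open>v\<close>, and its
  boundary is the set of out-neighbours of the region outside it; by the DFS property the boundary
  consists of ancestors of \<open>v\<close>. The bags \<open>{v} \<union> boundary v\<close>, with an arc from \<open>v\<close> to \<open>w\<close>
  whenever \<open>w\<close> lies in the region of \<open>v\<close> and \<open>boundary w \<subseteq> {v} \<union> boundary v\<close>, form a
  DAG-decomposition whose reachability order is containment of regions. If \<open>u\<close> is the topmost
  ancestor of \<open>v\<close> in the boundary of \<open>v\<close>, the tree path from \<open>u\<close> down to \<open>v\<close> followed by a walk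
  inside the region of \<open>v\<close> back to \<open>u\<close> is a directed cycle through the whole bag of \<open>v\<close>, so no
  bag has more than \<open>circ V E\<close> vertices.\<close>

section \<open>Walks and cycles\<close>

abbreviation is_walk :: "('a \<times> 'a) set \<Rightarrow> 'a list \<Rightarrow> bool" where
  "is_walk E \<equiv> successively (\<lambda>x y. (x, y) \<in> E)"

lemma walk_imp_rtrancl_Restr:
  assumes "is_walk E xs" "xs \<noteq> []" "set xs \<subseteq> U"
  shows "(hd xs, last xs) \<in> (Restr E U)\<^sup>*"
  using assms
proof (induction xs)
  case (Cons x xs)
  show ?case
  proof (cases "xs = []")
    case False
    then have "(x, hd xs) \<in> Restr E U" "(hd xs, last xs) \<in> (Restr E U)\<^sup>*"
      using Cons by (auto simp: successively_Cons)
    then show ?thesis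
      using False by (auto intro: converse_rtrancl_into_rtrancl)
  qed simp
qed simp

lemma rtrancl_Restr_imp_path:
  assumes "(a, b) \<in> (Restr E U)\<^sup>*" "a \<in> U"
  shows "\<exists>xs. is_walk E xs \<and> distinct xs \<and> set xs \<subseteq> U \<and> xs \<noteq> [] \<and> hd xs = a \<and> last xs = b"
  using assms(1)
proof (induction rule: rtrancl_induct)
  case base
  then show ?case using assms(2) by (intro exI[of _ "[a]"]) auto
next
  case (step y z)
  then obtain xs where xs: "is_walk E xs" "distinct xs" "set xs \<subseteq> U" "xs \<noteq> []" "hd xs = a" "last xs = y"
    by blast
  show ?case
  proof (cases "z \<in> set xs")
    case True
    then obtain p q where pq: "xs = p @ z # q" by (meson split_list)
    then have "is_walk E (p @ [z])" "hd (p @ [z]) = a"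
      using xs(1,5) successively_append_iff[of _ "p @ [z]" q] by (auto simp: hd_append)
    then show ?thesis using xs pq by (intro exI[of _ "p @ [z]"]) auto
  next
    case False
    have "is_walk E (xs @ [z])"
      using xs step(2) by (auto simp: successively_append_iff)
    then show ?thesis using xs False step(2) by (intro exI[of _ "xs @ [z]"]) auto
  qed
qed

lemma closed_walk_is_dicycle:
  assumes "is_walk E cs" "distinct cs" "2 \<le> length cs" "(last cs, hd cs) \<in> E"
  shows "is_dicycle E cs"
  unfolding is_dicycle_def
proof (intro conjI allI impI)
  fix i assume i: "i < length cs"
  show "(cs ! i, cs ! (Suc i mod length cs)) \<in> E"
  proof (cases "Suc i < length cs")
    case True
    then show ?thesis using successively_nth[OF assms(1) True] by simp
  next
    case False
    with i have "i = length cs - 1" "Suc i = length cs" by simp_all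
    moreover have "cs \<noteq> []" using assms(3) by auto
    ultimately have "cs ! i = last cs" "cs ! (Suc i mod length cs) = hd cs"
      by (simp_all add: last_conv_nth hd_conv_nth)
    then show ?thesis using assms(4) by simp
  qed
qed (use assms in auto)

lemma dicycle_subset:
  assumes "E \<subseteq> V \<times> V" "is_dicycle E cs"
  shows "set cs \<subseteq> V"
proof
  fix x assume "x \<in> set cs"
  then obtain i where "i < length cs" "x = cs ! i" by (metis in_set_conv_nth)
  with assms show "x \<in> V" unfolding is_dicycle_def by blast
qed

lemma dicycle_length_le_circ:
  assumes "finite V" "E \<subseteq> V \<times> V" "is_dicycle E cs"
  shows "length cs \<le> circ V E"
proof -
  have "{length cs | cs. is_dicycle E cs} \<subseteq> {..card V}"
  proof
    fix n assume "n \<in> {length cs | cs. is_dicycle E cs}"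
    then obtain cs where cs: "n = length cs" "is_dicycle E cs" by blast
    then have "n = card (set cs)" unfolding is_dicycle_def by (simp add: distinct_card)
    also have "\<dots> \<le> card V" using dicycle_subset[OF assms(2) cs(2)] assms(1) by (simp add: card_mono)
    finally show "n \<in> {..card V}" by simp
  qed
  then have "finite {length cs | cs. is_dicycle E cs}" by (rule finite_subset) simp
  then show ?thesis using assms(3) unfolding circ_def by (auto intro: Max_ge)
qed

lemma circ_ge_1:
  assumes "finite V" "E \<subseteq> V \<times> V"
  shows "1 \<le> circ V E"
proof (cases "\<exists>cs. is_dicycle E cs")
  case True
  then obtain cs where "is_dicycle E cs" by blast
  then have "2 \<le> length cs" "length cs \<le> circ V E"
    using dicycle_length_le_circ[OF assms] unfolding is_dicycle_def by auto
  then show ?thesis by simp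
qed (simp add: circ_def)

lemma rtrancl_Restr_in:
  "(a, b) \<in> (Restr E V)\<^sup>* \<Longrightarrow> a \<in> V \<Longrightarrow> b \<in> V"
  by (induction rule: rtrancl_induct) auto

lemma Image_rtrancl_Restr_from_successors:
  fixes E :: "('a \<times> 'a) set" and V :: "'a set" and s :: 'a
  defines "T \<equiv> (Restr E V)\<^sup>* `` {s} - {s}"
  shows "T \<subseteq> (Restr E T)\<^sup>* `` {n \<in> T. (s, n) \<in> E}"
proof
  fix x assume "x \<in> T"
  then have "(s, x) \<in> (Restr E V)\<^sup>*" "x \<noteq> s" unfolding T_def by auto
  then show "x \<in> (Restr E T)\<^sup>* `` {n \<in> T. (s, n) \<in> E}"
  proof (induction rule: rtrancl_induct)
    case (step y z)
    have "(s, z) \<in> (Restr E V)\<^sup>*" using step(1,2) by (rule rtrancl_into_rtrancl)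
    with step.prems have "z \<in> T" unfolding T_def by simp
    show ?case
    proof (cases "y = s")
      case True
      with step(2) \<open>z \<in> T\<close> have "z \<in> {n \<in> T. (s, n) \<in> E}" by simp
      then show ?thesis by (rule ImageI[OF rtrancl_refl])
    next
      case False
      with step(1) have "y \<in> T" unfolding T_def by simp
      from False step.IH obtain n where "n \<in> {n \<in> T. (s, n) \<in> E}" "(n, y) \<in> (Restr E T)\<^sup>*"
        by blast
      moreover have "(y, z) \<in> Restr E T" using step(2) \<open>y \<in> T\<close> \<open>z \<in> T\<close> by simp
      ultimately show ?thesis by (meson ImageI rtrancl_into_rtrancl)
    qed
  qed simp
qed

lemma Image_rtrancl_Restr_Diff_closed:
  assumes "V \<subseteq> (Restr E V)\<^sup>* `` S" and closed: "Restr E V `` R \<subseteq> R"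
  shows "V - R \<subseteq> (Restr E (V - R))\<^sup>* `` (S - R)"
proof
  fix x assume x: "x \<in> V - R"
  with assms(1) obtain a where "a \<in> S" "(a, x) \<in> (Restr E V)\<^sup>*" by blast
  moreover have "a \<notin> R \<and> (a, x) \<in> (Restr E (V - R))\<^sup>*" if "(a, x) \<in> (Restr E V)\<^sup>*" for a
    using that x
  proof (induction rule: converse_rtrancl_induct)
    case (step a c)
    then have "a \<notin> R" using closed by blast
    with step show ?case by (auto intro: converse_rtrancl_into_rtrancl)
  qed simp
  ultimately show "x \<in> (Restr E (V - R))\<^sup>* `` (S - R)" by blast
qed

section \<open>Depth-first search forests\<close>

text \<open>A depth-first search forest of \<open>(V, E)\<close>: \<open>f v\<close> is the finishing time of \<open>v\<close> and \<open>anc v\<close>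
  the tree path from the root of the tree of \<open>v\<close> down to the parent of \<open>v\<close>. The last assumption
  is the characteristic property of depth-first search: an arc from a vertex finished no later
  than \<open>w\<close> to a vertex finished after \<open>w\<close> enters an ancestor of \<open>w\<close>.\<close>
locale dfs_forest =
  fixes V :: "'a set" and E :: "('a \<times> 'a) set" and f :: "'a \<Rightarrow> nat" and anc :: "'a \<Rightarrow> 'a list"
  assumes finish_inj: "inj_on f V"
    and anc_subset: "v \<in> V \<Longrightarrow> set (anc v) \<subseteq> V"
    and anc_distinct: "v \<in> V \<Longrightarrow> distinct (anc v @ [v])"
    and anc_walk: "v \<in> V \<Longrightarrow> is_walk E (anc v @ [v])"
    and anc_prefix: "v \<in> V \<Longrightarrow> i < length (anc v) \<Longrightarrow> anc (anc v ! i) = take i (anc v)"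
    and anc_finish: "v \<in> V \<Longrightarrow> z \<in> set (anc v) \<Longrightarrow> f v < f z"
    and finish_arc: "\<lbrakk>w \<in> V; y \<in> V; z \<in> V; (y, z) \<in> E; f y \<le> f w; f w < f z\<rbrakk> \<Longrightarrow> z \<in> set (anc w)"

text \<open>Joining a tree with root \<open>s\<close> (whose subtrees form the forest on \<open>T\<close>) to a forest on \<open>F\<close>
  that is searched afterwards.\<close>
locale dfs_join =
  T: dfs_forest T E fT ancT + F: dfs_forest F E fF ancF
  for T E fT ancT F fF ancF +
  fixes s :: 'a
  assumes finite_T: "finite T"
    and s_notin_T: "s \<notin> T" and s_notin_F: "s \<notin> F" and disjoint: "T \<inter> F = {}"
    and root_arc: "v \<in> T \<Longrightarrow> (s, hd (ancT v @ [v])) \<in> E"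
    and no_arc_into_F: "y \<in> insert s T \<Longrightarrow> z \<in> F \<Longrightarrow> (y, z) \<notin> E"
begin

definition m :: nat where
  "m = Suc (Max (insert 0 (fT ` T)))"

definition finish :: "'a \<Rightarrow> nat" where
  "finish v = (if v \<in> T then fT v else if v = s then m else m + 1 + fF v)"

definition ancestors :: "'a \<Rightarrow> 'a list" where
  "ancestors v = (if v \<in> T then s # ancT v else if v = s then [] else ancF v)"

lemma finish_T_less: "v \<in> T \<Longrightarrow> finish v < m"
  using finite_T by (simp add: finish_def m_def le_imp_less_Suc)

lemma finish_cases:
  assumes "v \<in> insert s T \<union> F"
  obtains "v \<in> T" "finish v < m"
  | "v = s" "finish v = m"
  | "v \<in> F" "v \<notin> T" "v \<noteq> s" "finish v = m + 1 + fF v"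
  using assms finish_T_less s_notin_T by (auto simp: finish_def)

lemma finish_inj: "inj_on finish (insert s T \<union> F)"
proof (rule inj_onI)
  fix x y assume x: "x \<in> insert s T \<union> F" and y: "y \<in> insert s T \<union> F" and eq: "finish x = finish y"
  from x y show "x = y"
  proof (cases rule: finish_cases[OF x]; cases rule: finish_cases[OF y])
    assume "x \<in> T" "y \<in> T"
    then show "x = y" using eq T.finish_inj by (simp add: finish_def inj_on_def)
  next
    assume "x \<in> F" "y \<in> F" "x \<notin> T" "y \<notin> T" "x \<noteq> s" "y \<noteq> s"
    then show "x = y" using eq F.finish_inj by (simp add: finish_def inj_on_def)
  qed (use eq in auto)
qed

lemma finish_arc:
  assumes w: "w \<in> insert s T \<union> F" and y: "y \<in> insert s T \<union> F" and z: "z \<in> insert s T \<union> F"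
    and e: "(y, z) \<in> E" and le: "finish y \<le> finish w" and lt: "finish w < finish z"
  shows "z \<in> set (ancestors w)"
  using w
proof (cases rule: finish_cases)
  case 1
  then have "y \<in> T" using le y by (cases rule: finish_cases[OF y]) auto
  then have "z \<in> insert s T" using z e no_arc_into_F by blast
  then consider "z = s" | "z \<in> T" "fT y \<le> fT w" "fT w < fT z"
    using 1 \<open>y \<in> T\<close> le lt by (auto simp: finish_def)
  then show ?thesis
  proof cases
    case 2
    then show ?thesis using 1 \<open>y \<in> T\<close> e T.finish_arc by (simp add: ancestors_def)
  qed (use 1 in \<open>simp add: ancestors_def\<close>)
next
  case 2
  then have "y \<in> insert s T" using le y by (cases rule: finish_cases[OF y]) auto
  then have "z \<in> insert s T" using z e no_arc_into_F by blast
  then have "finish z \<le> m" using 2 finish_T_less[of z] by (cases "z = s") auto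
  with lt 2 show ?thesis by simp
next
  case 3
  have "z \<in> F \<and> z \<notin> T \<and> z \<noteq> s"
    using lt 3 by (cases rule: finish_cases[OF z]) auto
  then have "z \<in> F" "z \<notin> T" "z \<noteq> s" by auto
  then have "y \<in> F" "y \<notin> T" "y \<noteq> s" using y e no_arc_into_F by blast+
  then have "fF y \<le> fF w" "fF w < fF z"
    using 3 le lt \<open>z \<in> F\<close> \<open>z \<notin> T\<close> \<open>z \<noteq> s\<close> by (auto simp: finish_def)
  then show ?thesis using 3 \<open>y \<in> F\<close> \<open>z \<in> F\<close> e F.finish_arc by (simp add: ancestors_def)
qed

lemma ancestors_finish:
  assumes v: "v \<in> insert s T \<union> F" and z: "z \<in> set (ancestors v)"
  shows "finish v < finish z"
  using v
proof (cases rule: finish_cases)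
  case 1
  then have "z = s \<or> z \<in> set (ancT v) \<and> z \<in> T" using z T.anc_subset by (auto simp: ancestors_def)
  then show ?thesis using 1 T.anc_finish finish_T_less s_notin_T by (auto simp: finish_def)
next
  case 3
  then have "z \<in> set (ancF v)" "z \<in> F" using z F.anc_subset by (auto simp: ancestors_def)
  then show ?thesis using 3 F.anc_finish s_notin_F disjoint by (auto simp: finish_def)
qed (use z s_notin_T in \<open>simp add: ancestors_def\<close>)

lemma ancestors_prefix:
  assumes v: "v \<in> insert s T \<union> F" and i: "i < length (ancestors v)"
  shows "ancestors (ancestors v ! i) = take i (ancestors v)"
  using v
proof (cases rule: finish_cases)
  case 1
  show ?thesis
  proof (cases i)
    case (Suc k)
    then have "k < length (ancT v)" using i 1 by (simp add: ancestors_def)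
    then have "ancT v ! k \<in> T" using 1 T.anc_subset by (meson nth_mem subsetD)
    then show ?thesis using Suc 1 \<open>k < length (ancT v)\<close> T.anc_prefix by (simp add: ancestors_def)
  qed (use 1 s_notin_T in \<open>simp add: ancestors_def\<close>)
next
  case 3
  then have "i < length (ancF v)" using i by (simp add: ancestors_def)
  then have "ancF v ! i \<in> F" using 3 F.anc_subset by (meson nth_mem subsetD)
  then show ?thesis
    using 3 \<open>i < length (ancF v)\<close> F.anc_prefix s_notin_F disjoint by (auto simp: ancestors_def)
qed (use i s_notin_T in \<open>simp add: ancestors_def\<close>)

lemma dfs_forest: "dfs_forest (insert s T \<union> F) E finish ancestors"
proof
  fix v assume v: "v \<in> insert s T \<union> F"
  show "set (ancestors v) \<subseteq> insert s T \<union> F"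
    by (cases rule: finish_cases[OF v]) (use T.anc_subset F.anc_subset in \<open>auto simp: ancestors_def\<close>)
  show "distinct (ancestors v @ [v])"
    by (cases rule: finish_cases[OF v])
      (use T.anc_subset T.anc_distinct F.anc_distinct s_notin_T in \<open>auto simp: ancestors_def\<close>)
  show "is_walk E (ancestors v @ [v])"
  proof (cases rule: finish_cases[OF v])
    case 1
    then show ?thesis using root_arc T.anc_walk by (simp add: ancestors_def successively_Cons)
  qed (use F.anc_walk s_notin_T in \<open>auto simp: ancestors_def\<close>)
qed (use finish_inj ancestors_finish ancestors_prefix finish_arc in blast)+

lemma hd_ancestors:
  "v \<in> insert s T \<union> F \<Longrightarrow> hd (ancestors v @ [v]) = (if v \<in> F then hd (ancF v @ [v]) else s)"
  using s_notin_F disjoint by (auto simp: ancestors_def)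

end

lemma dfs_forest_exists:
  assumes "finite V" "S \<subseteq> V" "V \<subseteq> (Restr E V)\<^sup>* `` S"
  shows "\<exists>f anc. dfs_forest V E f anc \<and> (\<forall>v\<in>V. hd (anc v @ [v]) \<in> S)"
  using assms
proof (induction "card V" arbitrary: V S rule: less_induct)
  case less
  show ?case
  proof (cases "V = {}")
    case True
    then show ?thesis by (intro exI[of _ "\<lambda>_. 0::nat"] exI[of _ "\<lambda>_. []"]) (simp add: dfs_forest_def)
  next
    case False
    then obtain s where s: "s \<in> S" using less.prems(3) by blast
    with less.prems(2) have sV: "s \<in> V" by blast
    define R where "R = (Restr E V)\<^sup>* `` {s}"
    define T where "T = R - {s}"
    define F where "F = V - R"
    have RV: "R \<subseteq> V" unfolding R_def using rtrancl_Restr_in sV by (metis Image_singleton_iff subsetI)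
    have sR: "s \<in> R" unfolding R_def by simp
    have R_closed: "Restr E V `` R \<subseteq> R"
      unfolding R_def by (metis Image_singleton_iff ImageE rtrancl_into_rtrancl subsetI)
    have V_eq: "V = insert s T \<union> F" using RV sR unfolding T_def F_def by auto
    have "T \<subset> V" "F \<subset> V" using RV sR sV unfolding T_def F_def by auto
    then have finite: "finite T" "finite F" and card: "card T < card V" "card F < card V"
      using less.prems(1) by (auto intro: psubset_card_mono finite_subset)
    have "T \<subseteq> (Restr E T)\<^sup>* `` {n \<in> T. (s, n) \<in> E}"
      unfolding T_def R_def by (rule Image_rtrancl_Restr_from_successors)
    then obtain fT ancT where T: "dfs_forest T E fT ancT" "\<forall>v\<in>T. hd (ancT v @ [v]) \<in> {n \<in> T. (s, n) \<in> E}"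
      using less.hyps[OF card(1) finite(1), of "{n \<in> T. (s, n) \<in> E}"] by blast
    have "F \<subseteq> (Restr E F)\<^sup>* `` (S - R)"
      unfolding F_def using less.prems(3) R_closed by (rule Image_rtrancl_Restr_Diff_closed)
    moreover have "S - R \<subseteq> F" using less.prems(2) unfolding F_def by blast
    ultimately obtain fF ancF where F: "dfs_forest F E fF ancF" "\<forall>v\<in>F. hd (ancF v @ [v]) \<in> S - R"
      using less.hyps[OF card(2) finite(2), of "S - R"] by blast
    have "dfs_join T E fT ancT F fF ancF s"
    proof (intro dfs_join.intro dfs_join_axioms.intro T(1) F(1) finite(1))
      show "s \<notin> T" "s \<notin> F" "T \<inter> F = {}" unfolding T_def F_def using sR by auto
      show "(s, hd (ancT v @ [v])) \<in> E" if "v \<in> T" for v using T(2) that by blast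
      show "(y, z) \<notin> E" if "y \<in> insert s T" "z \<in> F" for y z
        using that R_closed RV sR unfolding T_def F_def by blast
    qed
    then interpret dfs_join T E fT ancT F fF ancF s .
    have "\<forall>v\<in>V. hd (ancestors v @ [v]) \<in> S"
      using hd_ancestors F(2) s unfolding V_eq by auto
    then show ?thesis using dfs_forest unfolding V_eq by blast
  qed
qed

section \<open>The decomposition induced by a depth-first search forest\<close>

locale finite_dfs = dfs_forest +
  assumes finite_V: "finite V" and E_subset: "E \<subseteq> V \<times> V"
begin

definition region :: "'a \<Rightarrow> 'a set" where
  "region v = (Restr E (- set (anc v)))\<^sup>* `` {v}"

definition boundary :: "'a \<Rightarrow> 'a set" where
  "boundary v = E `` region v - region v"

definition bag :: "'a \<Rightarrow> 'a set" where
  "bag v = insert v (boundary v)"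

definition arcs :: "('a \<times> 'a) set" where
  "arcs = {(v, w). v \<in> V \<and> w \<in> region v \<and> w \<noteq> v \<and> boundary w \<subseteq> bag v}"

lemma region_self: "v \<in> region v"
  by (simp add: region_def)

lemma region_subset: "v \<in> V \<Longrightarrow> region v \<subseteq> V"
  unfolding region_def using E_subset
  by (auto elim: rtrancl_induct)

lemma arcs_subset: "arcs \<subseteq> V \<times> V"
  unfolding arcs_def using region_subset by blast

lemma region_anc_disjoint:
  assumes v: "v \<in> V"
  shows "region v \<inter> set (anc v) = {}"
proof -
  have "x \<notin> set (anc v)" if "(v, x) \<in> (Restr E (- set (anc v)))\<^sup>*" for x
    using that anc_distinct[OF v] by (induction rule: rtrancl_induct) auto
  then show ?thesis unfolding region_def by blast
qed

lemma finite_region: "v \<in> V \<Longrightarrow> finite (region v)"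
  using region_subset finite_V by (rule finite_subset)

lemma arc_from_region: "y \<in> region v \<Longrightarrow> (y, z) \<in> E \<Longrightarrow> z \<in> region v \<or> z \<in> boundary v"
  unfolding boundary_def by blast

lemma boundary_subset: "boundary v \<subseteq> V"
  using E_subset unfolding boundary_def by blast

lemma boundary_region_disjoint: "boundary v \<inter> region v = {}"
  unfolding boundary_def by blast

lemma boundary_subset_anc: "v \<in> V \<Longrightarrow> boundary v \<subseteq> set (anc v)"
proof
  fix z assume v: "v \<in> V" and "z \<in> boundary v"
  then obtain y where y: "y \<in> region v" "(y, z) \<in> E" "z \<notin> region v" unfolding boundary_def by blast
  show "z \<in> set (anc v)"
  proof (rule ccontr)
    assume "z \<notin> set (anc v)"
    with y region_anc_disjoint[OF v] have "(y, z) \<in> Restr E (- set (anc v))" by auto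
    with y(1) have "z \<in> region v" unfolding region_def by (auto intro: rtrancl_into_rtrancl)
    with y(3) show False by contradiction
  qed
qed

lemma region_finish_le:
  assumes v: "v \<in> V" and x: "x \<in> region v"
  shows "f x \<le> f v"
proof -
  from x have "(v, x) \<in> (Restr E (- set (anc v)))\<^sup>*" unfolding region_def by simp
  then show ?thesis
  proof (induction rule: rtrancl_induct)
    case (step a b)
    then have ab: "(a, b) \<in> E" "b \<notin> set (anc v)" by auto
    with E_subset have "a \<in> V" "b \<in> V" by auto
    show ?case
    proof (rule ccontr)
      assume "\<not> f b \<le> f v"
      with finish_arc[OF v \<open>a \<in> V\<close> \<open>b \<in> V\<close> ab(1) step.IH] ab(2) show False by simp
    qed
  qed simp
qed

text \<open>A vertex \<open>w \<noteq> v\<close> of the region of \<open>v\<close> finishes before \<open>v\<close> and hence before every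
  ancestor of \<open>v\<close>, so walks inside the region of \<open>w\<close> never meet an ancestor of \<open>v\<close>.\<close>
lemma region_nested:
  assumes v: "v \<in> V" and w: "w \<in> region v" "w \<noteq> v"
  shows "region w \<subseteq> region v" and "v \<notin> region w"
proof -
  have wV: "w \<in> V" using region_subset[OF v] w by blast
  have "f w \<noteq> f v" using finish_inj v wV w(2) by (meson inj_on_def)
  with region_finish_le[OF v w(1)] have lt: "f w < f v" by simp
  then show "v \<notin> region w" using region_finish_le[OF wV] by fastforce
  show "region w \<subseteq> region v"
  proof
    fix x assume "x \<in> region w"
    then have "(w, x) \<in> (Restr E (- set (anc w)))\<^sup>*" unfolding region_def by simp
    then have "(v, x) \<in> (Restr E (- set (anc v)))\<^sup>*"
    proof (induction rule: rtrancl_induct)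
      case base
      then show ?case using w(1) unfolding region_def by simp
    next
      case (step a b)
      then have "a \<in> region w" "b \<in> region w" unfolding region_def by (auto intro: rtrancl_into_rtrancl)
      then have "f a < f v" "f b < f v" using region_finish_le[OF wV] lt by fastforce+
      then have "a \<notin> set (anc v)" "b \<notin> set (anc v)" using anc_finish[OF v] by fastforce+
      with step(2) have "(a, b) \<in> Restr E (- set (anc v))" by auto
      with step.IH show ?case by (rule rtrancl_into_rtrancl)
    qed
    then show "x \<in> region v" unfolding region_def by simp
  qed
qed

lemma region_of_anc:
  assumes x: "x \<in> V" and u: "u \<in> set (anc x)"
  shows "x \<in> region u"
proof -
  obtain j where j: "j < length (anc x)" "u = anc x ! j" using u by (metis in_set_conv_nth)
  have split: "anc x @ [x] = take j (anc x) @ (drop j (anc x) @ [x])" by simp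
  have "is_walk E (drop j (anc x) @ [x])"
    using anc_walk[OF x] unfolding split successively_append_iff by blast
  moreover have "set (drop j (anc x) @ [x]) \<subseteq> - set (anc u)"
    using anc_distinct[OF x] anc_prefix[OF x j(1)] j unfolding split
    by (auto simp del: append_take_drop_id)
  moreover have "hd (drop j (anc x) @ [x]) = u" using j by (simp add: hd_drop_conv_nth)
  ultimately have "(u, x) \<in> (Restr E (- set (anc u)))\<^sup>*"
    using walk_imp_rtrancl_Restr[of E "drop j (anc x) @ [x]"] by simp
  then show ?thesis unfolding region_def by simp
qed

text \<open>If the boundary of \<open>x\<close> is not inside \<open>bag v\<close>, a witness \<open>u\<close> is an ancestor of \<open>x\<close> in
  the region of \<open>v\<close> whose region strictly contains that of \<open>x\<close>; the induction moves from \<open>x\<close>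
  up to \<open>u\<close>.\<close>
lemma exists_arc_towards:
  assumes v: "v \<in> V"
  shows "x \<in> region v \<Longrightarrow> x \<noteq> v \<Longrightarrow> \<exists>w. (v, w) \<in> arcs \<and> x \<in> region w"
proof (induction "card (region v) - card (region x)" arbitrary: x rule: less_induct)
  case less
  show ?case
  proof (cases "boundary x \<subseteq> bag v")
    case True
    then show ?thesis using less.prems v region_self unfolding arcs_def by blast
  next
    case False
    then obtain u where u: "u \<in> boundary x" "u \<noteq> v" "u \<notin> boundary v" unfolding bag_def by blast
    have xV: "x \<in> V" using less.prems region_subset v by blast
    obtain y where "y \<in> region x" "(y, u) \<in> E" using u(1) unfolding boundary_def by blast
    with region_nested(1)[OF v less.prems] u(3) have uR: "u \<in> region v"
      using arc_from_region by blast
    have uV: "u \<in> V" using uR region_subset v by blast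
    have xu: "x \<in> region u" using region_of_anc[OF xV] boundary_subset_anc[OF xV] u(1) by blast
    have "u \<notin> region x" using u(1) boundary_region_disjoint by blast
    then have "region x \<subset> region u"
      using region_nested(1)[OF uV xu] region_self by blast
    moreover have "region u \<subseteq> region v" using region_nested(1)[OF v uR u(2)] .
    ultimately have "card (region v) - card (region u) < card (region v) - card (region x)"
      using finite_region[OF v] finite_region[OF uV] by (simp add: psubset_card_mono card_mono diff_less_mono2)
    with less.hyps uR u(2) obtain w where w: "(v, w) \<in> arcs" "u \<in> region w" by blast
    have wV: "w \<in> V" using w(1) region_subset v unfolding arcs_def by blast
    have "x \<in> region w"
      using xu region_nested(1)[OF wV w(2)] by (cases "u = w") auto
    with w(1) show ?thesis by blast
  qed
qed

lemma trancl_arcs_iff: "(v, w) \<in> arcs\<^sup>+ \<longleftrightarrow> v \<in> V \<and> w \<in> region v \<and> w \<noteq> v"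
proof
  assume "(v, w) \<in> arcs\<^sup>+"
  then show "v \<in> V \<and> w \<in> region v \<and> w \<noteq> v"
  proof (induction rule: trancl_induct)
    case (step y z)
    then have "y \<in> V" "z \<in> region y" "z \<noteq> y" unfolding arcs_def by auto
    with step.IH show ?case using region_nested[of v y] by auto
  qed (auto simp: arcs_def)
next
  show "(v, w) \<in> arcs\<^sup>+" if "v \<in> V \<and> w \<in> region v \<and> w \<noteq> v"
    using that
  proof (induction "card (region v)" arbitrary: v rule: less_induct)
    case less
    then obtain u where u: "(v, u) \<in> arcs" "w \<in> region u" using exists_arc_towards by blast
    then have uR: "u \<in> region v" "u \<noteq> v" unfolding arcs_def by auto
    show ?case
    proof (cases "w = u")
      case False
      have "region u \<subset> region v" using region_nested[OF _ uR] less.prems region_self by blast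
      then have "card (region u) < card (region v)"
        using finite_region less.prems by (blast intro: psubset_card_mono)
      with less.hyps u(2) False uR region_subset less.prems have "(u, w) \<in> arcs\<^sup>+" by blast
      with u(1) show ?thesis by simp
    qed (use u in blast)
  qed
qed

lemma dpreceq_arcs_iff: "v \<in> V \<Longrightarrow> dpreceq arcs v w \<longleftrightarrow> w \<in> region v"
  unfolding dpreceq_def dprec_def trancl_arcs_iff using region_self by auto

lemma Xsucceq_bag:
  assumes j: "j \<in> V"
  shows "Xsucceq V arcs bag j = region j \<union> boundary j"
proof -
  have "{k \<in> V. dpreceq arcs j k} = region j"
    using dpreceq_arcs_iff[OF j] region_subset[OF j] by auto
  then have "Xsucceq V arcs bag j = (\<Union>k\<in>region j. bag k)" unfolding Xsucceq_def by simp
  also have "\<dots> = region j \<union> boundary j"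
  proof
    show "(\<Union>k\<in>region j. bag k) \<subseteq> region j \<union> boundary j"
    proof
      fix z assume "z \<in> (\<Union>k\<in>region j. bag k)"
      then obtain k where k: "k \<in> region j" "z \<in> bag k" by blast
      show "z \<in> region j \<union> boundary j"
      proof (cases "z = k")
        case False
        with k(2) obtain y where "y \<in> region k" "(y, z) \<in> E" unfolding bag_def boundary_def by blast
        moreover have "region k \<subseteq> region j" using region_nested(1)[OF j k(1)] by (cases "k = j") auto
        ultimately show ?thesis using arc_from_region by blast
      qed (use k in simp)
    qed
    show "region j \<union> boundary j \<subseteq> (\<Union>k\<in>region j. bag k)"
      using region_self unfolding bag_def by blast
  qed
  finally show ?thesis .
qed

text \<open>A root has no proper ancestors in the region order, while every boundary vertex is an
  ancestor in the DFS forest, whose region contains the root.\<close>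
lemma boundary_root:
  assumes "is_root V arcs r"
  shows "boundary r = {}"
proof (rule ccontr)
  assume "boundary r \<noteq> {}"
  then obtain u where u: "u \<in> boundary r" by blast
  have rV: "r \<in> V" using assms unfolding is_root_def by simp
  have ua: "u \<in> set (anc r)" using boundary_subset_anc[OF rV] u by blast
  have "u \<in> V" "r \<in> region u" using anc_subset[OF rV] ua region_of_anc[OF rV ua] by auto
  moreover have "r \<noteq> u" using u boundary_region_disjoint region_self by blast
  ultimately have "(u, r) \<in> arcs\<^sup>+" using trancl_arcs_iff by blast
  then obtain i where "(i, r) \<in> arcs" by (meson tranclE)
  with assms show False unfolding is_root_def by blast
qed

lemma bag_interpolation:
  assumes V3: "i \<in> V" "j \<in> V" "k \<in> V" and ij: "j \<in> region i" and jk: "k \<in> region j"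
  shows "bag i \<inter> bag k \<subseteq> bag j"
proof (cases "i = j \<or> j = k")
  case False
  then have Dji: "region j \<subseteq> region i" "i \<notin> region j" using region_nested[OF V3(1) ij] by auto
  have Dkj: "region k \<subseteq> region j" using region_nested[OF V3(2) jk] False by auto
  have "k \<in> region i" "k \<noteq> i" using Dji jk by auto
  show ?thesis
  proof
    fix x assume x: "x \<in> bag i \<inter> bag k"
    have "x \<noteq> k"
      using x \<open>k \<in> region i\<close> \<open>k \<noteq> i\<close> boundary_region_disjoint unfolding bag_def by blast
    then obtain y where "y \<in> region k" "(y, x) \<in> E" "x \<notin> region k"
      using x unfolding bag_def boundary_def by blast
    moreover have "x \<notin> region j"
      using x Dji boundary_region_disjoint unfolding bag_def by blast
    ultimately show "x \<in> bag j" using Dkj unfolding bag_def boundary_def by blast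
  qed
qed auto

lemma arc_guards:
  assumes "(i, c) \<in> arcs"
  shows "guards E (bag i \<inter> bag c) (Xsucceq V arcs bag c - bag i)"
proof -
  from assms have iV: "i \<in> V" and cR: "c \<in> region i" "c \<noteq> i" and Nc: "boundary c \<subseteq> bag i"
    unfolding arcs_def by auto
  have cV: "c \<in> V" using cR region_subset iV by blast
  have Kc: "region c \<subseteq> region i" "i \<notin> region c" using region_nested[OF iV cR] by auto
  have "region c \<inter> boundary i = {}" using Kc(1) boundary_region_disjoint by blast
  then have W: "Xsucceq V arcs bag c - bag i = region c"
    using Xsucceq_bag[OF cV] Nc Kc(2) boundary_region_disjoint unfolding bag_def by blast
  show ?thesis
    unfolding W guards_def
  proof (intro conjI allI impI)
    show "region c \<inter> (bag i \<inter> bag c) = {}"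
      using \<open>region c \<inter> boundary i = {}\<close> Kc(2) unfolding bag_def by auto
    show "b \<in> region c \<union> bag i \<inter> bag c" if "(a, b) \<in> E" "a \<in> region c" for a b
      using arc_from_region[OF that(2,1)] Nc unfolding bag_def by auto
  qed
qed

lemma root_guards:
  assumes r: "is_root V arcs r"
  shows "guards E {} (Xsucceq V arcs bag r)"
proof -
  have "r \<in> V" using r unfolding is_root_def by simp
  then have "Xsucceq V arcs bag r = region r" using Xsucceq_bag boundary_root[OF r] by simp
  then show ?thesis
    using arc_from_region[of _ r] boundary_root[OF r] unfolding guards_def by auto
qed

theorem dag_decomposition: "dag_decomposition V E V arcs bag"
  unfolding dag_decomposition_def
proof (intro conjI)
  show "arcs \<subseteq> V \<times> V" by (rule arcs_subset)
  show "acyclic arcs" unfolding acyclic_def using trancl_arcs_iff by blast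
  show "\<forall>i\<in>V. bag i \<subseteq> V" "(\<Union>i\<in>V. bag i) = V"
    unfolding bag_def using boundary_subset by blast+
  show "\<forall>i\<in>V. \<forall>j\<in>V. \<forall>k\<in>V. dpreceq arcs i j \<and> dpreceq arcs j k \<longrightarrow> bag i \<inter> bag k \<subseteq> bag j"
    using bag_interpolation dpreceq_arcs_iff by blast
  show "\<forall>(i, j)\<in>arcs. guards E (bag i \<inter> bag j) (Xsucceq V arcs bag j - bag i)"
    using arc_guards by blast
  show "\<forall>r. is_root V arcs r \<longrightarrow> guards E {} (Xsucceq V arcs bag r)"
    using root_guards by blast
qed (rule finite_V)

lemma dicycle_through_anc_suffix:
  assumes v: "v \<in> V" and i: "i < length (anc v)"
    and y: "y \<in> region v" "(y, anc v ! i) \<in> E"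
  shows "\<exists>cs. is_dicycle E cs \<and> insert v (set (drop i (anc v))) \<subseteq> set cs"
proof -
  have "(v, y) \<in> (Restr E (- set (anc v)))\<^sup>*" using y(1) unfolding region_def by simp
  from rtrancl_Restr_imp_path[OF this] anc_distinct[OF v] obtain q where
    q: "is_walk E q" "distinct q" "set q \<subseteq> - set (anc v)" "q \<noteq> []" "hd q = v" "last q = y"
    by auto
  define cs where "cs = drop i (anc v) @ q"
  have split: "anc v @ [v] = take i (anc v) @ (drop i (anc v) @ [v])" by simp
  have "is_walk E (drop i (anc v) @ [v])"
    using anc_walk[OF v] unfolding split successively_append_iff by blast
  then have "is_walk E cs"
    using q i unfolding cs_def by (auto simp: successively_append_iff)
  moreover have "distinct cs"
    using q anc_distinct[OF v] set_drop_subset[of i "anc v"] unfolding cs_def by auto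
  moreover have "2 \<le> length cs" unfolding cs_def using i q(4) by (cases q) auto
  moreover have "(last cs, hd cs) \<in> E" unfolding cs_def using q y(2) i by (simp add: hd_drop_conv_nth)
  ultimately have "is_dicycle E cs" by (rule closed_walk_is_dicycle)
  moreover have "insert v (set (drop i (anc v))) \<subseteq> set cs"
    using q(4,5) unfolding cs_def by (cases q) auto
  ultimately show ?thesis by blast
qed

lemma card_bag_le_circ:
  assumes v: "v \<in> V"
  shows "card (bag v) \<le> circ V E"
proof (cases "boundary v = {}")
  case True
  then show ?thesis using circ_ge_1[OF finite_V E_subset] unfolding bag_def by simp
next
  case False
  have "\<exists>i. i < length (anc v) \<and> anc v ! i \<in> boundary v"
    using False boundary_subset_anc[OF v] by (metis in_set_conv_nth subset_iff ex_in_conv)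
  then obtain i where i: "i < length (anc v)" "anc v ! i \<in> boundary v"
    and first: "\<And>k. k < i \<Longrightarrow> anc v ! k \<notin> boundary v"
    using exists_least_iff[of "\<lambda>i. i < length (anc v) \<and> anc v ! i \<in> boundary v"] by auto
  obtain y where "y \<in> region v" "(y, anc v ! i) \<in> E" using i(2) unfolding boundary_def by blast
  from dicycle_through_anc_suffix[OF v i(1) this] obtain cs
    where cs: "is_dicycle E cs" "insert v (set (drop i (anc v))) \<subseteq> set cs" by blast
  have "boundary v \<subseteq> set (drop i (anc v))"
  proof
    fix z assume z: "z \<in> boundary v"
    then obtain k where "k < length (anc v)" "z = anc v ! k"
      using boundary_subset_anc[OF v] by (metis in_set_conv_nth subsetD)
    moreover have "i \<le> k" using first z calculation by (meson not_le)
    ultimately have "z = drop i (anc v) ! (k - i)" "k - i < length (drop i (anc v))" by auto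
    then show "z \<in> set (drop i (anc v))" by (metis nth_mem)
  qed
  with cs(2) have "card (bag v) \<le> card (set cs)" unfolding bag_def by (intro card_mono) auto
  also have "\<dots> \<le> length cs" by (rule card_length)
  also have "\<dots> \<le> circ V E" using dicycle_length_le_circ[OF finite_V E_subset cs(1)] .
  finally show ?thesis .
qed

end

section \<open>Relabelling the nodes of a decomposition\<close>

lemma trancl_map_prod: "(a, b) \<in> r\<^sup>+ \<Longrightarrow> (h a, h b) \<in> (map_prod h h ` r)\<^sup>+"
proof (induction rule: trancl_induct)
  case (step y z)
  then have "(h y, h z) \<in> map_prod h h ` r" by force
  with step.IH show ?case by (rule trancl_into_trancl)
qed force

context
  fixes h :: "'b \<Rightarrow> 'c" and N :: "'b set" and A :: "('b \<times> 'b) set"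
  assumes inj: "inj_on h N" and A_subset: "A \<subseteq> N \<times> N"
begin

lemma map_prod_inv_into_image: "map_prod (inv_into N h) (inv_into N h) ` map_prod h h ` A = A"
proof -
  have "map_prod (inv_into N h) (inv_into N h) (map_prod h h p) = p" if "p \<in> A" for p
    using that A_subset inv_into_f_f[OF inj] by (cases p) auto
  then show ?thesis by (simp add: image_image)
qed

lemma trancl_map_prod_iff:
  assumes "a \<in> N" "b \<in> N"
  shows "(h a, h b) \<in> (map_prod h h ` A)\<^sup>+ \<longleftrightarrow> (a, b) \<in> A\<^sup>+"
proof
  assume "(h a, h b) \<in> (map_prod h h ` A)\<^sup>+"
  from trancl_map_prod[OF this, of "inv_into N h"] show "(a, b) \<in> A\<^sup>+"
    unfolding map_prod_inv_into_image using inv_into_f_f[OF inj] assms by simp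
qed (rule trancl_map_prod)

lemma dpreceq_map_prod_iff:
  "a \<in> N \<Longrightarrow> b \<in> N \<Longrightarrow> dpreceq (map_prod h h ` A) (h a) (h b) \<longleftrightarrow> dpreceq A a b"
  unfolding dpreceq_def dprec_def using trancl_map_prod_iff inj by (auto simp: inj_on_def)

lemma Xsucceq_relabel:
  assumes "j \<in> N"
  shows "Xsucceq (h ` N) (map_prod h h ` A) (X \<circ> inv_into N h) (h j) = Xsucceq N A X j"
  unfolding Xsucceq_def using dpreceq_map_prod_iff[OF assms] inv_into_f_f[OF inj] by auto

lemma is_root_relabel:
  assumes "r \<in> N"
  shows "is_root (h ` N) (map_prod h h ` A) (h r) \<longleftrightarrow> is_root N A r"
proof -
  have "(\<exists>i. (i, h r) \<in> map_prod h h ` A) \<longleftrightarrow> (\<exists>i. (i, r) \<in> A)"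
  proof
    assume "\<exists>i. (i, h r) \<in> map_prod h h ` A"
    then obtain c d where "(c, d) \<in> A" "h d = h r" by auto
    moreover then have "d = r" using A_subset inj assms by (auto simp: inj_on_def)
    ultimately show "\<exists>i. (i, r) \<in> A" by blast
  qed force
  then show ?thesis unfolding is_root_def using assms by (metis imageI)
qed

lemma dag_decomposition_relabel:
  assumes "dag_decomposition V E N A X"
  shows "dag_decomposition V E (h ` N) (map_prod h h ` A) (X \<circ> inv_into N h)"
proof -
  note d = assms[unfolded dag_decomposition_def]
  let ?A = "map_prod h h ` A" and ?X = "X \<circ> inv_into N h"
  have X: "?X (h i) = X i" if "i \<in> N" for i using inv_into_f_f[OF inj that] by simp
  show ?thesis
    unfolding dag_decomposition_def
  proof (intro conjI)
    show "finite (h ` N)" using d by simp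
    show "?A \<subseteq> h ` N \<times> h ` N" using A_subset by auto
    show "acyclic ?A" unfolding acyclic_def
    proof
      fix x show "(x, x) \<notin> ?A\<^sup>+"
      proof
        assume xx: "(x, x) \<in> ?A\<^sup>+"
        then have "x \<in> h ` N" using trancl_subset_Sigma[of ?A "h ` N"] A_subset by auto
        with xx trancl_map_prod_iff d show False unfolding acyclic_def by auto
      qed
    qed
    show "\<forall>i\<in>h ` N. ?X i \<subseteq> V" "(\<Union>i\<in>h ` N. ?X i) = V" using d X by auto
    show "\<forall>i\<in>h ` N. \<forall>j\<in>h ` N. \<forall>k\<in>h ` N. dpreceq ?A i j \<and> dpreceq ?A j k \<longrightarrow> ?X i \<inter> ?X k \<subseteq> ?X j"
      using d X dpreceq_map_prod_iff by auto
    show "\<forall>(i', j')\<in>?A. guards E (?X i' \<inter> ?X j') (Xsucceq (h ` N) ?A ?X j' - ?X i')"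
    proof (intro ballI, clarify)
      fix i j assume ij: "(i, j) \<in> A"
      then have "i \<in> N" "j \<in> N" using A_subset by auto
      moreover have "guards E (X i \<inter> X j) (Xsucceq N A X j - X i)" using d ij by auto
      ultimately show "guards E (?X (h i) \<inter> ?X (h j)) (Xsucceq (h ` N) ?A ?X (h j) - ?X (h i))"
        by (simp only: X Xsucceq_relabel)
    qed
    show "\<forall>r'. is_root (h ` N) ?A r' \<longrightarrow> guards E {} (Xsucceq (h ` N) ?A ?X r')"
    proof (intro allI impI)
      fix r' assume r': "is_root (h ` N) ?A r'"
      then obtain r where r: "r \<in> N" "r' = h r" unfolding is_root_def by auto
      with r' have "guards E {} (Xsucceq N A X r)" using d is_root_relabel by blast
      with r show "guards E {} (Xsucceq (h ` N) ?A ?X r')" by (simp only: Xsucceq_relabel)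
    qed
  qed
qed

lemma dd_width_relabel: "dd_width (h ` N) (X \<circ> inv_into N h) = dd_width N X"
proof -
  have "(\<lambda>i. card ((X \<circ> inv_into N h) i)) ` h ` N = (\<lambda>i. card (X i)) ` N"
    using inv_into_f_f[OF inj] by (auto simp: image_iff)
  then show ?thesis unfolding dd_width_def by simp
qed

end

theorem mainTheorem2:
  fixes V :: "'a set" and E :: "('a \<times> 'a) set"
  assumes "simple_digraph V E"
  shows "dgw V E \<le> circ V E + 1"
proof -
  have fin: "finite V" and EV: "E \<subseteq> V \<times> V" using assms unfolding simple_digraph_def by auto
  have "V \<subseteq> (Restr E V)\<^sup>* `` V" by blast
  then obtain f anc where "dfs_forest V E f anc" using dfs_forest_exists[OF fin] by blast
  with fin EV interpret finite_dfs V E f anc by (simp add: finite_dfs_def finite_dfs_axioms_def)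
  obtain h :: "'a \<Rightarrow> nat" where h: "inj_on h V"
    using finite_imp_inj_to_nat_seg[OF fin] by blast
  note relabel = dag_decomposition_relabel[OF h arcs_subset dag_decomposition]
    dd_width_relabel[OF h arcs_subset]
  have "dd_width V bag \<le> circ V E"
    unfolding dd_width_def using finite_V card_bag_le_circ by (intro Max.boundedI) auto
  moreover have "dgw V E \<le> dd_width V bag"
    unfolding dgw_def using relabel by (intro Least_le) blast
  ultimately show ?thesis by simp
qed

end
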